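(* For $s\in\mathbb{R}$ let $\mathcal{H}_s=\{h(z)=\sum_{n\ge0}a_nz^n:\ \|h\|_s^2=\sum_{n\ge0}(1+n)^{-s}|a_n|^2<\infty\}$. The embedding dimension of $\mathcal{H}_0$ is $1$, and for every $s<0$ the embedding dimension of $\mathcal{H}_s$ is $\infty$.
   Context: $\mathcal{H}_s$ is a reproducing kernel Hilbert space of analytic functions on the unit disc $\mathbb{D}$ with kernel $k(z,w)=\sum_{n\ge0}(1+n)^s(z\bar w)^n$; for $s\le0$ it is an irreducible complete Pick space. The embedding dimension of an RKHS on $\mathbb{D}$ with kernel $k$ is the smallest $d\in\mathbb{N}\cup\{\infty\}$ for which there exist a map $b:\mathbb{D}\to\mathbb{B}_d$ (open unit ball of $\mathbb{C}^d$, with $\mathbb{C}^\infty=\ell^2(\mathbb{N})$) and a nowhere-vanishing $\delta:\mathbb{D}\to\mathbb{C}$ with $k(z,w)=\frac{\delta(z)\overline{\delta(w)}}{1-\langle b(z),b(w)\rangle}$. *)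

theory Defs
  imports "HOL-Analysis.Analysis" "HOL-Library.Extended_Nat"
begin

text \<open>Reproducing kernel of H_s: k_s(z,w) = sum_n (1+n)^s (z conj w)^n.\<close>
definition Hs_kernel :: "real \<Rightarrow> complex \<Rightarrow> complex \<Rightarrow> complex" where
  "Hs_kernel s z w = (\<Sum>n. complex_of_real ((1 + real n) powr s) * (z * cnj w) ^ n)"

text \<open>C^d (d finite) and l^2(N) (d = infinity) are both modelled as square-summable
  sequences nat => complex; for finite d the coordinates with index >= d vanish.\<close>
definition in_ball_d :: "enat \<Rightarrow> (nat \<Rightarrow> complex) \<Rightarrow> bool" where
  "in_ball_d d v \<longleftrightarrow> (\<forall>i. d \<le> enat i \<longrightarrow> v i = 0) \<and>
      summable (\<lambda>i. (cmod (v i))\<^sup>2) \<and> (\<Sum>i. (cmod (v i))\<^sup>2) < 1"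

definition seq_inner :: "(nat \<Rightarrow> complex) \<Rightarrow> (nat \<Rightarrow> complex) \<Rightarrow> complex" where
  "seq_inner u v = (\<Sum>i. u i * cnj (v i))"

definition embeds_in_dim :: "(complex \<Rightarrow> complex \<Rightarrow> complex) \<Rightarrow> enat \<Rightarrow> bool" where
  "embeds_in_dim k d \<longleftrightarrow> (\<exists>(b :: complex \<Rightarrow> nat \<Rightarrow> complex) (\<delta> :: complex \<Rightarrow> complex).
     (\<forall>z \<in> ball 0 1. in_ball_d d (b z) \<and> \<delta> z \<noteq> 0) \<and>
     (\<forall>z \<in> ball 0 1. \<forall>w \<in> ball 0 1.
        k z w = \<delta> z * cnj (\<delta> w) / (1 - seq_inner (b z) (b w))))"

definition embedding_dim :: "(complex \<Rightarrow> complex \<Rightarrow> complex) \<Rightarrow> enat" where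
  "embedding_dim k = (LEAST d. embeds_in_dim k d)"

end

theory Submission
  imports Defs "HOL-Library.Function_Algebras" "HOL-Complex_Analysis.Cauchy_Integral_Formula"
begin

text \<open>
  The kernel of \<open>H_s\<close> is \<open>F(z * conj w)\<close> with \<open>F(x) = \<Sum> a_n x^n\<close>, \<open>a_n = (1+n)^s\<close>.
  For \<open>s = 0\<close> this is the Szego kernel \<open>1/(1 - z * conj w)\<close>, visibly of dimension one and
  not of rank one. For \<open>s < 0\<close> the sequence \<open>a_n\<close> is strictly log-convex, so by Kaluza's lemma
  \<open>1 - 1/F = G = \<Sum> c_n x^n\<close> with \<open>c_n > 0\<close> for \<open>n \<ge> 1\<close>; then \<open>b(z) = (sqrt c_n * z^n)_n\<close>
  embeds \<open>H_s\<close> into \<open>l^2\<close>. Conversely, an embedding into \<open>\<complex>^d\<close> writes \<open>1/k(z,w)\<close> as a sum of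
  \<open>d + 1\<close> products \<open>p_i(z) q_i(w)\<close>, so any \<open>d + 2\<close> of the functions \<open>w \<mapsto> 1/k(z,w)\<close> are
  linearly dependent. But \<open>1/k(z,w) = 1 - G(z * conj w)\<close>, and for distinct \<open>z \<in> (0,1)\<close> these
  functions are independent: their Taylor coefficients are \<open>-c_n z^n\<close> with all \<open>c_n \<noteq> 0\<close>, and
  distinct powers \<open>z^n\<close> cannot cancel for every \<open>n\<close>.
\<close>

section \<open>Kaluza's lemma\<close>

text \<open>The coefficients of \<open>1 - 1/F\<close> for \<open>F(x) = \<Sum> a_n x^n\<close> with \<open>a_0 = 1\<close>.\<close>
function kaluza_coeff :: "(nat \<Rightarrow> real) \<Rightarrow> nat \<Rightarrow> real" where
  "kaluza_coeff a n =
     (if n = 0 then 0 else a n - (\<Sum>k\<in>{1..<n}. kaluza_coeff a k * a (n - k)))"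
  by auto
termination by (relation "Wellfounded.measure snd") auto

declare kaluza_coeff.simps [simp del]

lemma kaluza_coeff_0 [simp]: "kaluza_coeff a 0 = 0"
  by (simp add: kaluza_coeff.simps)

lemma kaluza_coeff_rec:
  assumes "a 0 = 1" and "1 \<le> n"
  shows "a n = (\<Sum>k=1..n. kaluza_coeff a k * a (n - k))"
proof -
  have "{1..n} = insert n {1..<n}" using assms(2) by auto
  then have "(\<Sum>k=1..n. kaluza_coeff a k * a (n - k))
      = kaluza_coeff a n + (\<Sum>k\<in>{1..<n}. kaluza_coeff a k * a (n - k))"
    using assms(1) by simp
  also have "kaluza_coeff a n = a n - (\<Sum>k\<in>{1..<n}. kaluza_coeff a k * a (n - k))"
    using assms(2) by (subst kaluza_coeff.simps) simp
  finally show ?thesis by simp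
qed

lemma kaluza_coeff_convolution:
  assumes "a 0 = 1"
  shows "(\<Sum>i\<le>n. a i * kaluza_coeff a (n - i)) = (if n = 0 then 0 else a n)"
proof (cases "n = 0")
  case False
  have "(\<Sum>i\<le>n. a i * kaluza_coeff a (n - i)) = (\<Sum>k=1..n. kaluza_coeff a k * a (n - k))"
    by (rule sum.reindex_bij_witness_not_neutral
          [where i="\<lambda>k. n - k" and j="\<lambda>i. n - i" and S'="{n}" and T'="{0}"]) auto
  then show ?thesis using kaluza_coeff_rec[of a n, OF assms] False by simp
qed simp

lemma kaluza_coeff_pos:
  assumes a0: "a 0 = 1" and pos: "\<And>n. 0 < a n"
    and ratio: "strict_mono (\<lambda>n. a (Suc n) / a n)" and "1 \<le> n"
  shows "0 < kaluza_coeff a n"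
  using \<open>1 \<le> n\<close>
proof (induction n rule: less_induct)
  case (less n)
  show ?case
  proof (cases "n = 1")
    case True
    then show ?thesis using pos by (simp add: kaluza_coeff.simps)
  next
    case False
    then obtain m where m: "n = Suc m" "1 \<le> m" using less.prems by (cases n) auto
    define r where "r = a (Suc m) / a m"
    have "kaluza_coeff a n = a (Suc m) - (\<Sum>k=1..m. kaluza_coeff a k * a (Suc m - k))"
      using m by (subst kaluza_coeff.simps) (simp add: atLeastLessThanSuc_atLeastAtMost)
    also have "a (Suc m) = r * a m"
      unfolding r_def using pos[of m] by simp
    also have "\<dots> = (\<Sum>k=1..m. kaluza_coeff a k * (r * a (m - k)))"
      using kaluza_coeff_rec[of a m, OF a0 m(2)] by (simp add: sum_distrib_left algebra_simps)
    finally have eq: "kaluza_coeff a n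
        = (\<Sum>k=1..m. kaluza_coeff a k * (r * a (m - k) - a (Suc m - k)))"
      by (simp add: sum_subtractf algebra_simps)
    have "0 < (\<Sum>k=1..m. kaluza_coeff a k * (r * a (m - k) - a (Suc m - k)))"
    proof (rule sum_pos)
      fix k assume k: "k \<in> {1..m}"
      have "0 < kaluza_coeff a k" using less.IH[of k] k m by auto
      moreover have "a (Suc (m - k)) / a (m - k) < r"
        unfolding r_def using strict_monoD[OF ratio, of "m - k" m] k by auto
      then have "a (Suc m - k) < r * a (m - k)"
        using pos[of "m - k"] k by (simp add: Suc_diff_le field_simps)
      ultimately show "0 < kaluza_coeff a k * (r * a (m - k) - a (Suc m - k))" by simp
    qed (use m in auto)
    then show ?thesis using eq by simp
  qed
qed

lemma kaluza_coeff_le: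
  assumes "a 0 = 1" and "\<And>n. 0 \<le> a n" and "\<And>n. 0 \<le> kaluza_coeff a n"
  shows "kaluza_coeff a n \<le> a n"
proof (cases "n = 0")
  case False
  then have "kaluza_coeff a n * a (n - n) \<le> (\<Sum>k=1..n. kaluza_coeff a k * a (n - k))"
    by (intro member_le_sum) (auto intro!: mult_nonneg_nonneg assms(2,3))
  then show ?thesis using kaluza_coeff_rec[of a n, OF assms(1)] assms(1) False by simp
qed (use assms in simp)

definition real_powser :: "(nat \<Rightarrow> real) \<Rightarrow> 'a::{real_normed_field,banach} \<Rightarrow> 'a" where
  "real_powser a x = (\<Sum>n. of_real (a n) * x ^ n)"

lemma real_powser_mult_one_minus_kaluza:
  fixes x :: "'a::{real_normed_field,banach}"
  assumes a0: "a 0 = 1"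
    and sa: "summable (\<lambda>n. norm (of_real (a n) * x ^ n))"
    and sc: "summable (\<lambda>n. norm (of_real (kaluza_coeff a n) * x ^ n))"
  shows "real_powser a x * (1 - real_powser (kaluza_coeff a) x) = 1"
proof -
  have "real_powser a x * real_powser (kaluza_coeff a) x
      = (\<Sum>n. \<Sum>i\<le>n. of_real (a i) * x ^ i * (of_real (kaluza_coeff a (n - i)) * x ^ (n - i)))"
    unfolding real_powser_def by (rule Cauchy_product[OF sa sc])
  also have "\<dots> = (\<Sum>n. of_real (a n) * x ^ n - 0 ^ n)"
  proof (rule arg_cong[where f=suminf], rule ext)
    fix n
    have "(\<Sum>i\<le>n. of_real (a i) * x ^ i * (of_real (kaluza_coeff a (n - i)) * x ^ (n - i)))
        = of_real (\<Sum>i\<le>n. a i * kaluza_coeff a (n - i)) * (x ^ n :: 'a)"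
      unfolding of_real_sum sum_distrib_right
      by (intro sum.cong) (auto simp: power_add[symmetric] mult_ac)
    then show "(\<Sum>i\<le>n. of_real (a i) * x ^ i * (of_real (kaluza_coeff a (n - i)) * x ^ (n - i)))
        = of_real (a n) * x ^ n - 0 ^ n"
      using a0 by (simp add: kaluza_coeff_convolution)
  qed
  also have "\<dots> = real_powser a x - 1"
    using sums_diff[OF summable_sums[OF summable_norm_cancel[OF sa]] powser_sums_zero[of "\<lambda>_. 1"]]
    unfolding real_powser_def by (simp add: sums_iff)
  finally show ?thesis by (simp add: algebra_simps)
qed

lemma one_minus_real_powser_sums:
  fixes x :: "'a::{real_normed_field,banach}"
  assumes "summable (\<lambda>n. norm (of_real (c n) * x ^ n))"
  shows "(\<lambda>n. of_real (0 ^ n - c n) * x ^ n) sums (1 - real_powser c x)"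
proof -
  have "(\<lambda>n. 0 ^ n - of_real (c n) * x ^ n) sums (1 - real_powser c x)"
    using sums_diff[OF powser_sums_zero[of "\<lambda>_. 1"] summable_sums[OF summable_norm_cancel[OF assms]]]
    unfolding real_powser_def by simp
  then show ?thesis by (simp add: left_diff_distrib power_mult_distrib[symmetric])
qed

lemma summable_norm_powser_coeff_le_1:
  fixes x :: "'a::real_normed_div_algebra"
  assumes "\<And>n. norm (f n) \<le> 1" and "norm x < 1"
  shows "summable (\<lambda>n. norm (f n * x ^ n))"
proof (rule summable_comparison_test'[OF summable_geometric[of "norm x"]])
  show "norm (norm (f n * x ^ n)) \<le> norm x ^ n" for n
    using assms(1)[of n] by (simp add: norm_mult norm_power mult_left_le_one_le)
qed (use assms(2) in simp)

section \<open>The coefficients of \<open>H_s\<close>\<close>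

definition Hs_coeff :: "real \<Rightarrow> nat \<Rightarrow> real" where
  "Hs_coeff s n = (1 + real n) powr s"

lemma Hs_kernel_eq_real_powser: "Hs_kernel s z w = real_powser (Hs_coeff s) (z * cnj w)"
  unfolding Hs_kernel_def real_powser_def Hs_coeff_def by simp

lemma Hs_coeff_pos: "0 < Hs_coeff s n"
  by (simp add: Hs_coeff_def)

lemma Hs_coeff_0 [simp]: "Hs_coeff s 0 = 1"
  by (simp add: Hs_coeff_def)

lemma Hs_coeff_le_1: "s \<le> 0 \<Longrightarrow> Hs_coeff s n \<le> 1"
  unfolding Hs_coeff_def using powr_mono[of s 0 "1 + real n"] by simp

lemma Hs_coeff_ratio_strict_mono:
  assumes "s < 0"
  shows "strict_mono (\<lambda>n. Hs_coeff s (Suc n) / Hs_coeff s n)"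
proof (rule strict_monoI)
  fix m m' :: nat assume "m < m'"
  have ratio: "Hs_coeff s (Suc k) / Hs_coeff s k = ((real k + 2) / (real k + 1)) powr s" for k
    unfolding Hs_coeff_def by (simp add: powr_divide add.commute add.left_commute)
  have "(real m' + 2) / (real m' + 1) < (real m + 2) / (real m + 1)"
    using \<open>m < m'\<close> by (simp add: field_simps)
  then show "Hs_coeff s (Suc m) / Hs_coeff s m < Hs_coeff s (Suc m') / Hs_coeff s m'"
    unfolding ratio using powr_less_mono2_neg[OF assms] by simp
qed

lemma kaluza_coeff_Hs_pos: "s < 0 \<Longrightarrow> 1 \<le> n \<Longrightarrow> 0 < kaluza_coeff (Hs_coeff s) n"
  by (rule kaluza_coeff_pos) (auto simp: Hs_coeff_pos Hs_coeff_ratio_strict_mono)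

lemma kaluza_coeff_Hs_nonneg: "s < 0 \<Longrightarrow> 0 \<le> kaluza_coeff (Hs_coeff s) n"
  using kaluza_coeff_Hs_pos[of s n] by (cases n) auto

lemma kaluza_coeff_Hs_le_1: "s < 0 \<Longrightarrow> kaluza_coeff (Hs_coeff s) n \<le> 1"
  using kaluza_coeff_le[of "Hs_coeff s" n] Hs_coeff_le_1[of s n]
  by (simp add: kaluza_coeff_Hs_nonneg less_imp_le[OF Hs_coeff_pos])

lemma summable_norm_Hs_coeff:
  fixes x :: "'a::{real_normed_field,banach}"
  shows "s \<le> 0 \<Longrightarrow> norm x < 1 \<Longrightarrow> summable (\<lambda>n. norm (of_real (Hs_coeff s n) * x ^ n))"
  by (rule summable_norm_powser_coeff_le_1)
     (simp_all add: Hs_coeff_le_1 abs_of_pos[OF Hs_coeff_pos])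

lemma summable_norm_kaluza_coeff_Hs:
  fixes x :: "'a::{real_normed_field,banach}"
  shows "s < 0 \<Longrightarrow> norm x < 1 \<Longrightarrow>
    summable (\<lambda>n. norm (of_real (kaluza_coeff (Hs_coeff s) n) * x ^ n))"
  by (rule summable_norm_powser_coeff_le_1)
     (simp_all add: kaluza_coeff_Hs_le_1 kaluza_coeff_Hs_nonneg)

lemma Hs_real_powser_mult_one_minus_kaluza:
  fixes x :: "'a::{real_normed_field,banach}"
  assumes "s < 0" and "norm x < 1"
  shows "real_powser (Hs_coeff s) x * (1 - real_powser (kaluza_coeff (Hs_coeff s)) x) = 1"
  using assms
  by (intro real_powser_mult_one_minus_kaluza summable_norm_Hs_coeff summable_norm_kaluza_coeff_Hs)
     simp_all

lemma real_powser_kaluza_Hs_lt_1: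
  fixes r :: real
  assumes "s < 0" and "0 \<le> r" and "r < 1"
  shows "real_powser (kaluza_coeff (Hs_coeff s)) r < 1"
proof -
  have "summable (\<lambda>n. Hs_coeff s n * r ^ n)"
    using assms summable_norm_cancel[OF summable_norm_Hs_coeff[of s r]] by simp
  then have "0 \<le> real_powser (Hs_coeff s) r"
    unfolding real_powser_def using assms
    by (simp add: suminf_nonneg less_imp_le[OF Hs_coeff_pos])
  moreover have "real_powser (Hs_coeff s) r * (1 - real_powser (kaluza_coeff (Hs_coeff s)) r) = 1"
    using assms by (intro Hs_real_powser_mult_one_minus_kaluza) auto
  ultimately show ?thesis
    by (smt (verit) mult_nonneg_nonpos)
qed

section \<open>Linear independence of dilates of a power series\<close>

lemma sum_powers_eq_0_imp_eq_0:
  fixes Z :: "real set" and u :: "real \<Rightarrow> complex"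
  assumes "finite Z" and "Z \<subseteq> {0<..}" and "\<And>n. (\<Sum>z\<in>Z. u z * of_real z ^ n) = 0"
  shows "\<forall>z\<in>Z. u z = 0"
  using assms
proof (induction Z rule: finite_linorder_max_induct)
  case (insert b A)
  have "b > 0" "b \<notin> A" using insert by auto
  txt \<open>Dividing by \<open>b^n\<close> for the largest \<open>b\<close> leaves \<open>u b\<close> plus terms tending to \<open>0\<close>.\<close>
  have eq: "u b + (\<Sum>z\<in>A. u z * of_real (z / b) ^ n) = 0" for n
  proof -
    have "0 = (\<Sum>z\<in>insert b A. u z * of_real z ^ n) / of_real b ^ n"
      using insert.prems by simp
    also have "\<dots> = u b + (\<Sum>z\<in>A. u z * of_real (z / b) ^ n)"
      using \<open>b \<notin> A\<close> \<open>b > 0\<close> insert.hyps(1)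
      by (simp add: add_divide_distrib sum_divide_distrib power_divide)
    finally show ?thesis by simp
  qed
  have "(\<lambda>n. \<Sum>z\<in>A. u z * of_real (z / b) ^ n) \<longlonglongrightarrow> 0"
  proof (rule tendsto_null_sum)
    fix z assume "z \<in> A"
    then have "0 < z" "z < b" using insert by auto
    then have "norm (complex_of_real (z / b)) < 1"
      by (simp add: norm_divide abs_of_pos)
    then show "(\<lambda>n. u z * of_real (z / b) ^ n) \<longlonglongrightarrow> 0"
      by (intro tendsto_mult_right_zero LIMSEQ_power_zero)
  qed
  then have "(\<lambda>n. u b + (\<Sum>z\<in>A. u z * of_real (z / b) ^ n)) \<longlonglongrightarrow> u b"
    using tendsto_add[OF tendsto_const] by fastforce
  then have ub: "u b = 0"
    unfolding eq by (simp add: LIMSEQ_const_iff)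
  then have "(\<Sum>z\<in>A. u z * of_real z ^ n) = 0" for n
    using insert.prems(2)[of n] insert.hyps(1) \<open>b \<notin> A\<close> by simp
  then show ?case using insert.IH insert.prems(1) ub by auto
qed simp

lemma powser_sums_0_imp_coeff_eq_0:
  fixes E :: "nat \<Rightarrow> complex"
  assumes "\<And>x. norm x < 1 \<Longrightarrow> (\<lambda>n. E n * x ^ n) sums 0"
  shows "E m = 0"
proof (rule ccontr)
  assume "E m \<noteq> 0"
  have "E 0 = 0" using assms[of 0] by (simp add: sums_iff)
  with \<open>E m \<noteq> 0\<close> have "m > 0" by (cases m) auto
  have sums: "\<And>x. norm (x - 0) < 1 \<Longrightarrow> (\<lambda>n. E n * (x - 0) ^ n) sums ((\<lambda>_. 0::complex) x)"
    using assms by simp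
  show False
  proof (rule powser_0_nonzero[of 1 0 E "\<lambda>_. 0" m, OF zero_less_one sums refl \<open>E m \<noteq> 0\<close> \<open>m > 0\<close>])
    fix r :: real
    assume "0 < r" and nonzero: "\<And>z::complex. z \<in> cball 0 r - {0} \<Longrightarrow> (0::complex) \<noteq> 0"
    have "complex_of_real r \<in> cball 0 r - {0}" using \<open>0 < r\<close> by auto
    from nonzero[OF this] show False by simp
  qed
qed

lemma powser_dilates_independent:
  fixes h :: "nat \<Rightarrow> complex" and u :: "real \<Rightarrow> complex"
  assumes sums: "\<And>x. norm x < 1 \<Longrightarrow> (\<lambda>n. h n * x ^ n) sums H x"
    and h: "\<And>n. h n \<noteq> 0" and "finite Z" and Z: "Z \<subseteq> {0<..<1}"
    and zero: "\<And>w. norm w < 1 \<Longrightarrow> (\<Sum>z\<in>Z. u z * H (of_real z * w)) = 0"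
  shows "\<forall>z\<in>Z. u z = 0"
proof (rule sum_powers_eq_0_imp_eq_0[OF \<open>finite Z\<close>])
  have "(\<lambda>n. (h n * (\<Sum>z\<in>Z. u z * of_real z ^ n)) * x ^ n) sums 0" if "norm x < 1" for x
  proof -
    have "(\<lambda>n. u z * (h n * (of_real z * x) ^ n)) sums (u z * H (of_real z * x))"
      if "z \<in> Z" for z
    proof (intro sums_mult sums)
      have "norm (of_real z * x) \<le> norm x"
        using \<open>z \<in> Z\<close> Z by (auto simp: norm_mult intro!: mult_left_le_one_le)
      then show "norm (of_real z * x) < 1" using \<open>norm x < 1\<close> by simp
    qed
    then have "(\<lambda>n. \<Sum>z\<in>Z. u z * (h n * (of_real z * x) ^ n))
        sums (\<Sum>z\<in>Z. u z * H (of_real z * x))"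
      by (rule sums_sum)
    then have "(\<lambda>n. \<Sum>z\<in>Z. u z * (h n * (of_real z * x) ^ n)) sums 0"
      using zero[OF \<open>norm x < 1\<close>] by simp
    then show ?thesis
      by (simp add: sum_distrib_left sum_distrib_right power_mult_distrib mult_ac)
  qed
  then have coeff: "h n * (\<Sum>z\<in>Z. u z * of_real z ^ n) = 0" for n
    by (rule powser_sums_0_imp_coeff_eq_0)
  show "(\<Sum>z\<in>Z. u z * of_real z ^ n) = 0" for n
    using coeff[of n] h[of n] by simp
qed (use Z in auto)

section \<open>Kernels of finite rank\<close>

lemma sum_fun_apply: "sum f A x = (\<Sum>a\<in>A. f a x)"
  by (induction A rule: infinite_finite_induct) auto

lemma card_le_rank_of_kernel:
  fixes \<psi> :: "'z \<Rightarrow> 'w \<Rightarrow> complex"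
  assumes "finite Z"
    and rank: "\<And>z w. z \<in> Z \<Longrightarrow> w \<in> W \<Longrightarrow> \<psi> z w = (\<Sum>i<n. p i z * q i w)"
    and indep: "\<And>u. (\<And>w. w \<in> W \<Longrightarrow> (\<Sum>z\<in>Z. u z * \<psi> z w) = 0) \<Longrightarrow> \<forall>z\<in>Z. u z = 0"
  shows "card Z \<le> n"
proof -
  interpret fun_space: vector_space "\<lambda>(c::complex) (f::'w \<Rightarrow> complex) x. c * f x"
    by unfold_locales (auto simp: fun_eq_iff algebra_simps)
  define row where "row z = (\<lambda>w. if w \<in> W then \<psi> z w else 0)" for z
  define col where "col i = (\<lambda>w. if w \<in> W then q i w else 0)" for i
  have row_sum: "\<forall>z\<in>Z. u z = 0" if "(\<Sum>z\<in>Z. (\<lambda>w. u z * row z w)) = 0" for u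
  proof (rule indep)
    fix w assume "w \<in> W"
    have "(\<Sum>z\<in>Z. (\<lambda>w. u z * row z w)) w = 0" using that by simp
    then show "(\<Sum>z\<in>Z. u z * \<psi> z w) = 0" using \<open>w \<in> W\<close> by (simp add: sum_fun_apply row_def)
  qed
  have "inj_on row Z"
  proof (rule inj_onI, rule ccontr)
    fix x y assume "x \<in> Z" "y \<in> Z" "row x = row y" "x \<noteq> y"
    define u where "u z = (if z = x then 1 else if z = y then -1 else 0 :: complex)" for z
    have "(\<Sum>z\<in>Z. (\<lambda>w. u z * row z w)) = (\<Sum>z\<in>{x, y}. (\<lambda>w. u z * row z w))"
      using \<open>finite Z\<close> \<open>x \<in> Z\<close> \<open>y \<in> Z\<close> by (intro sum.mono_neutral_right) (auto simp: u_def)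
    also have "\<dots> = 0"
      using \<open>row x = row y\<close> \<open>x \<noteq> y\<close> by (simp add: u_def fun_eq_iff)
    finally have "\<forall>z\<in>Z. u z = 0" by (rule row_sum)
    then have "u x = 0" using \<open>x \<in> Z\<close> by blast
    then show False by (simp add: u_def)
  qed
  have "fun_space.independent (row ` Z)"
  proof (rule fun_space.independent_if_scalars_zero)
    fix f v assume sum_0: "(\<Sum>v\<in>row ` Z. (\<lambda>w. f v * v w)) = 0" and "v \<in> row ` Z"
    then obtain z where "z \<in> Z" "v = row z" by blast
    have "(\<Sum>z\<in>Z. (\<lambda>w. f (row z) * row z w)) = 0"
      using sum_0 unfolding sum.reindex[OF \<open>inj_on row Z\<close>] by simp
    then show "f v = 0" using row_sum[of "\<lambda>z. f (row z)"] \<open>z \<in> Z\<close> \<open>v = row z\<close> by blast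
  qed (use \<open>finite Z\<close> in simp)
  moreover have "row z \<in> fun_space.span (col ` {..<n})" if "z \<in> Z" for z
  proof -
    have "row z = (\<Sum>i<n. (\<lambda>w. p i z * col i w))"
      using rank[OF that] by (auto simp: row_def col_def fun_eq_iff sum_fun_apply)
    also have "\<dots> \<in> fun_space.span (col ` {..<n})"
      by (intro fun_space.span_sum fun_space.span_scale fun_space.span_base) auto
    finally show ?thesis .
  qed
  ultimately have "card (row ` Z) \<le> card (col ` {..<n})"
    using fun_space.independent_span_bound[of "col ` {..<n}" "row ` Z"] by auto
  then show ?thesis
    using card_image[OF \<open>inj_on row Z\<close>] card_image_le[of "{..<n}" col] by simp
qed

lemma one_div_pick_quotient:
  fixes \<beta> \<gamma> :: "nat \<Rightarrow> complex"
  shows "1 / (\<delta> * \<epsilon> / (1 - (\<Sum>i<d. \<beta> i * \<gamma> i)))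
    = 1 / \<delta> * (1 / \<epsilon>) + (\<Sum>i<d. (- \<beta> i / \<delta>) * (\<gamma> i / \<epsilon>))"
proof -
  have "(\<Sum>i<d. (- \<beta> i / \<delta>) * (\<gamma> i / \<epsilon>)) = - ((\<Sum>i<d. \<beta> i * \<gamma> i) / (\<delta> * \<epsilon>))"
    unfolding sum_divide_distrib sum_negf[symmetric] by (rule sum.cong) auto
  then show ?thesis by (simp add: diff_divide_distrib)
qed

section \<open>Embedding dimension of \<open>H_s\<close>\<close>

lemma embedding_dim_eqI:
  assumes "embeds_in_dim k d" and "\<And>d'. d' < d \<Longrightarrow> \<not> embeds_in_dim k d'"
  shows "embedding_dim k = d"
  unfolding embedding_dim_def
  by (rule Least_equality) (use assms not_less in blast)+

lemma seq_inner_finite_dim: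
  assumes "in_ball_d (enat d) u"
  shows "seq_inner u v = (\<Sum>i<d. u i * cnj (v i))"
  unfolding seq_inner_def
  by (rule suminf_finite) (use assms in \<open>auto simp: in_ball_d_def\<close>)

lemma norm_mult_cnj_lt_1: "z \<in> ball 0 1 \<Longrightarrow> w \<in> ball 0 1 \<Longrightarrow> norm (z * cnj w) < 1"
  using mult_strict_mono'[of "cmod z" 1 "cmod w" 1] by (simp add: norm_mult)

lemma one_div_Hs_kernel:
  assumes "s < 0" and "z \<in> ball 0 1" and "w \<in> ball 0 1"
  shows "1 / Hs_kernel s z w = 1 - real_powser (kaluza_coeff (Hs_coeff s)) (z * cnj w)"
  using Hs_real_powser_mult_one_minus_kaluza[OF assms(1) norm_mult_cnj_lt_1[OF assms(2,3)]]
  unfolding Hs_kernel_eq_real_powser by (simp add: inverse_unique flip: inverse_eq_divide)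

lemma Hs_kernel_embeds_dim_infinity:
  assumes "s < 0"
  shows "embeds_in_dim (Hs_kernel s) \<infinity>"
proof -
  define c where "c = kaluza_coeff (Hs_coeff s)"
  define b where "b z i = complex_of_real (sqrt (c i)) * z ^ i" for z :: complex and i
  have c_nonneg: "0 \<le> c i" for i
    unfolding c_def using kaluza_coeff_Hs_nonneg[OF assms] .
  have "in_ball_d \<infinity> (b z)" if "z \<in> ball 0 1" for z
  proof -
    define r where "r = (cmod z)\<^sup>2"
    have "0 \<le> r" "r < 1"
      using that by (auto simp: r_def power_less_one_iff abs_square_less_1)
    have norms: "(\<lambda>i. (cmod (b z i))\<^sup>2) = (\<lambda>i. c i * r ^ i)"
      using c_nonneg
      by (auto simp: b_def r_def norm_mult norm_power power_mult_distrib mult.commute[of 2]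
          simp flip: power_mult)
    have "summable (\<lambda>i. c i * r ^ i)"
      using summable_norm_cancel[OF summable_norm_kaluza_coeff_Hs[OF assms, of r]]
        \<open>0 \<le> r\<close> \<open>r < 1\<close> by (simp add: c_def)
    moreover have "(\<Sum>i. c i * r ^ i) < 1"
      using real_powser_kaluza_Hs_lt_1[OF assms \<open>0 \<le> r\<close> \<open>r < 1\<close>]
      by (simp add: real_powser_def c_def)
    ultimately show ?thesis unfolding in_ball_d_def norms by simp
  qed
  moreover have "Hs_kernel s z w = 1 * cnj 1 / (1 - seq_inner (b z) (b w))"
    if "z \<in> ball 0 1" "w \<in> ball 0 1" for z w
  proof -
    have "seq_inner (b z) (b w) = real_powser c (z * cnj w)"
      unfolding seq_inner_def real_powser_def b_def
    proof (rule arg_cong[where f=suminf], rule ext)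
      fix i
      have "complex_of_real (sqrt (c i)) * complex_of_real (sqrt (c i)) = complex_of_real (c i)"
        using c_nonneg[of i] by (simp flip: of_real_mult)
      then show "complex_of_real (sqrt (c i)) * z ^ i * cnj (complex_of_real (sqrt (c i)) * w ^ i)
          = complex_of_real (c i) * (z * cnj w) ^ i"
        by (simp add: power_mult_distrib algebra_simps)
    qed
    then have "1 / Hs_kernel s z w = 1 - seq_inner (b z) (b w)"
      using one_div_Hs_kernel[OF assms that] by (simp add: c_def)
    then show ?thesis by (metis divide_divide_eq_right mult_1 complex_cnj_one div_by_1)
  qed
  ultimately show ?thesis
    unfolding embeds_in_dim_def by (intro exI[of _ b] exI[of _ "\<lambda>_. 1"]) auto
qed

lemma Hs_kernel_not_embeds_finite_dim:
  assumes "s < 0"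
  shows "\<not> embeds_in_dim (Hs_kernel s) (enat d)"
proof
  assume "embeds_in_dim (Hs_kernel s) (enat d)"
  then obtain b \<delta> where
    ball: "\<And>z. z \<in> ball 0 1 \<Longrightarrow> in_ball_d (enat d) (b z)" and
    kernel: "\<And>z w. z \<in> ball 0 1 \<Longrightarrow> w \<in> ball 0 1 \<Longrightarrow>
      Hs_kernel s z w = \<delta> z * cnj (\<delta> w) / (1 - seq_inner (b z) (b w))"
    unfolding embeds_in_dim_def by blast
  define c where "c = kaluza_coeff (Hs_coeff s)"
  define \<psi> where "\<psi> z w = 1 - real_powser c (of_real z * cnj w)" for z :: real and w
  define p where "p i z = (if i = 0 then 1 else - b (of_real z) (i - 1)) / \<delta> (of_real z)"
    for i and z :: real
  define q where "q i w = (if i = 0 then 1 else cnj (b w (i - 1))) / cnj (\<delta> w)" for i w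
  define Z where "Z = (\<lambda>j. 1 / (real j + 2)) ` {..<d + 2}"
  have "Z \<subseteq> {0<..<1}" unfolding Z_def by auto
  have "card Z \<le> Suc d"
  proof (rule card_le_rank_of_kernel[where W="ball 0 1" and \<psi>=\<psi> and p=p and q=q])
    show "finite Z" unfolding Z_def by simp
    show "\<psi> z w = (\<Sum>i<Suc d. p i z * q i w)" if "z \<in> Z" and "w \<in> ball 0 1" for z w
    proof -
      have "of_real z \<in> ball (0::complex) 1" using that(1) \<open>Z \<subseteq> {0<..<1}\<close> by auto
      then show ?thesis
        using one_div_Hs_kernel[OF assms _ that(2)] kernel[OF _ that(2)]
          seq_inner_finite_dim[OF ball] one_div_pick_quotient
        by (simp add: \<psi>_def c_def p_def q_def sum.lessThan_Suc_shift del: sum.lessThan_Suc)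
    qed
    show "\<forall>z\<in>Z. u z = 0" if zero: "\<And>w. w \<in> ball 0 1 \<Longrightarrow> (\<Sum>z\<in>Z. u z * \<psi> z w) = 0" for u
    proof (rule powser_dilates_independent)
      show "(\<lambda>n. of_real (0 ^ n - c n) * x ^ n) sums (1 - real_powser c x)" if "norm x < 1" for x
        unfolding c_def
        by (rule one_minus_real_powser_sums[OF summable_norm_kaluza_coeff_Hs[OF assms that]])
      show "complex_of_real (0 ^ n - c n) \<noteq> 0" for n
        using kaluza_coeff_Hs_pos[OF assms, of n] by (cases n) (simp_all add: c_def)
      show "(\<Sum>z\<in>Z. u z * (1 - real_powser c (of_real z * w))) = 0" if "norm w < 1" for w
        using zero[of "cnj w"] that by (simp add: \<psi>_def)
    qed (use \<open>Z \<subseteq> {0<..<1}\<close> in \<open>simp_all add: Z_def\<close>)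
  qed
  moreover have "card Z = d + 2"
    unfolding Z_def by (subst card_image) (auto simp: inj_on_def)
  ultimately show False by simp
qed

lemma Hs_kernel_0_eq: "norm (z * cnj w) < 1 \<Longrightarrow> Hs_kernel 0 z w = 1 / (1 - z * cnj w)"
  unfolding Hs_kernel_def by (simp add: suminf_geometric)

lemma Hs_kernel_0_embeds_dim_1: "embeds_in_dim (Hs_kernel 0) 1"
proof -
  define b where "b z i = (if i = 0 then z else 0)" for z :: complex and i :: nat
  have "in_ball_d 1 (b z)" if "z \<in> ball 0 1" for z
  proof -
    have "(\<lambda>i. (cmod (b z i))\<^sup>2) = (\<lambda>i. if i = 0 then (cmod z)\<^sup>2 else 0)"
      by (auto simp: b_def)
    then have "(\<lambda>i. (cmod (b z i))\<^sup>2) sums (cmod z)\<^sup>2"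
      using sums_single[of 0 "\<lambda>_. (cmod z)\<^sup>2"] by simp
    moreover have "(cmod z)\<^sup>2 < 1"
      using that by (simp add: power_less_one_iff abs_square_less_1)
    ultimately show ?thesis
      unfolding in_ball_d_def by (auto simp: b_def sums_iff one_enat_def)
  qed
  moreover have "seq_inner (b z) (b w) = z * cnj w" for z w
  proof -
    have "(\<lambda>i. b z i * cnj (b w i)) = (\<lambda>i. if i = 0 then z * cnj w else 0)"
      by (auto simp: b_def)
    then show ?thesis
      unfolding seq_inner_def using sums_unique[OF sums_single[of 0 "\<lambda>_. z * cnj w"]] by simp
  qed
  ultimately show ?thesis
    unfolding embeds_in_dim_def
    by (intro exI[of _ b] exI[of _ "\<lambda>_. 1"]) (auto simp: Hs_kernel_0_eq norm_mult_cnj_lt_1)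
qed

lemma Hs_kernel_0_not_embeds_dim_0: "\<not> embeds_in_dim (Hs_kernel 0) 0"
proof
  assume "embeds_in_dim (Hs_kernel 0) 0"
  then obtain b \<delta> where
    ball: "\<And>z. z \<in> ball 0 1 \<Longrightarrow> in_ball_d 0 (b z) \<and> \<delta> z \<noteq> 0" and
    kernel: "\<And>z w. z \<in> ball 0 1 \<Longrightarrow> w \<in> ball 0 1 \<Longrightarrow>
      Hs_kernel 0 z w = \<delta> z * cnj (\<delta> w) / (1 - seq_inner (b z) (b w))"
    unfolding embeds_in_dim_def by blast
  have rank_one: "Hs_kernel 0 z w = \<delta> z * cnj (\<delta> w)" if "z \<in> ball 0 1" "w \<in> ball 0 1" for z w
    using kernel[OF that] seq_inner_finite_dim[of 0 "b z" "b w"] ball[OF that(1)]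
    by (simp add: zero_enat_def)
  txt \<open>The Gram matrix of \<open>k\<close> at the points \<open>0\<close> and \<open>1/2\<close> is \<open>[[1, 1], [1, 4/3]]\<close>,
    which is not of rank one.\<close>
  define h where "h = (1/2 :: complex)"
  have "h \<in> ball 0 1" "(0::complex) \<in> ball 0 1" by (auto simp: h_def)
  have gram: "\<delta> 0 * cnj (\<delta> 0) = 1" "\<delta> 0 * cnj (\<delta> h) = 1" "\<delta> h * cnj (\<delta> h) = 4/3"
    using rank_one[OF \<open>0 \<in> ball 0 1\<close> \<open>0 \<in> ball 0 1\<close>] rank_one[OF \<open>0 \<in> ball 0 1\<close> \<open>h \<in> ball 0 1\<close>]
      rank_one[OF \<open>h \<in> ball 0 1\<close> \<open>h \<in> ball 0 1\<close>]
    by (simp_all add: Hs_kernel_0_eq h_def)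
  moreover have "\<delta> 0 \<noteq> 0" using ball[OF \<open>0 \<in> ball 0 1\<close>] by simp
  ultimately have "cnj (\<delta> h) = cnj (\<delta> 0)" by (metis mult_left_cancel)
  then have "\<delta> h = \<delta> 0" by simp
  then show False using gram by simp
qed

theorem theorem1p11:
  shows "embedding_dim (Hs_kernel 0) = 1 \<and>
         (\<forall>s::real. s < 0 \<longrightarrow> embedding_dim (Hs_kernel s) = \<infinity>)"
proof (intro conjI allI impI)
  show "embedding_dim (Hs_kernel 0) = 1"
  proof (rule embedding_dim_eqI[OF Hs_kernel_0_embeds_dim_1])
    show "\<not> embeds_in_dim (Hs_kernel 0) d" if "d < 1" for d
      using that Hs_kernel_0_not_embeds_dim_0 by (cases d) (auto simp: one_enat_def zero_enat_def)
  qed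
next
  fix s :: real assume "s < 0"
  show "embedding_dim (Hs_kernel s) = \<infinity>"
  proof (rule embedding_dim_eqI[OF Hs_kernel_embeds_dim_infinity[OF \<open>s < 0\<close>]])
    show "\<not> embeds_in_dim (Hs_kernel s) d" if "d < \<infinity>" for d
      using that Hs_kernel_not_embeds_finite_dim[OF \<open>s < 0\<close>] by (cases d) auto
  qed
qed

end
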